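(* Every $W_1$-module in category $\mathcal{J}_1$ is a polynomial module.
   Context: Take $n=1$. Let $\mathcal{F}(\mathbb{T}^1)$ be the commutative algebra with $\mathbb{C}$-basis $e_m=e^{2\pi i m x}$, $m\in\mathbb{Z}$, and $e_me_k=e_{m+k}$. Let $W_1$ be the Lie algebra with $\mathbb{C}$-basis $d(s)=\frac{1}{2\pi i}e^{2\pi i s x}\frac{d}{dx}$, $s\in\mathbb{Z}$, and bracket $[d(s),d(m)]=(m-s)\,d(s+m)$. $W_1$ acts on $\mathcal{F}(\mathbb{T}^1)$ by derivations via $d(s)e_m=m\,e_{m+s}$. Category $\mathcal{J}_1$ consists of $W_1$-modules $J$ that are also $\mathcal{F}(\mathbb{T}^1)$-modules and satisfy: (J1) $d(0)$ acts diagonalizably on $J$; (J2) $J$ is a free $\mathcal{F}(\mathbb{T}^1)$-module of finite rank; (J3) $u(fw)=(uf)w+f(uw)$ for all $u\in W_1$, $f\in\mathcal{F}(\mathbb{T}^1)$, $w\in J$. A module $J$ in $\mathcal{J}_1$ is a polynomial module if there is a basis $v_1,\dots,v_k$ of $J$ over $\mathcal{F}(\mathbb{T}^1)$ such that $d(s)(e_m v_r)=\sum_{\ell=1}^k f_{r\ell}(s,m)\,e_{m+s}v_\ell$ for all $s,m\in\mathbb{Z}$, where each $f_{r\ell}(s,m)$ is a polynomial in $s$ and $m$. *)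

theory Defs
  imports Complex_Main
begin

text \<open>The F(T^1)-module structure is given by the (linear) action
E m of the basis element e_m; the W_1-module structure by the (linear) action
D s of the basis element d(s).\<close>

definition F_module :: "(complex \<Rightarrow> 'v::ab_group_add \<Rightarrow> 'v) \<Rightarrow> (int \<Rightarrow> 'v \<Rightarrow> 'v) \<Rightarrow> bool" where
  "F_module sc E \<longleftrightarrow> (\<forall>m. Vector_Spaces.linear sc sc (E m)) \<and> (\<forall>w. E 0 w = w)
      \<and> (\<forall>m k w. E m (E k w) = E (m + k) w)"

definition W1_module :: "(complex \<Rightarrow> 'v::ab_group_add \<Rightarrow> 'v) \<Rightarrow> (int \<Rightarrow> 'v \<Rightarrow> 'v) \<Rightarrow> bool" where
  "W1_module sc D \<longleftrightarrow> (\<forall>s. Vector_Spaces.linear sc sc (D s))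
      \<and> (\<forall>s m w. D s (D m w) - D m (D s w) = sc (of_int (m - s)) (D (s + m) w))"

definition d0_diagonalizable :: "(complex \<Rightarrow> 'v::ab_group_add \<Rightarrow> 'v) \<Rightarrow> (int \<Rightarrow> 'v \<Rightarrow> 'v) \<Rightarrow> bool" where
  "d0_diagonalizable sc D \<longleftrightarrow>
     (\<forall>w. w \<in> module.span sc {v. \<exists>a. D 0 v = sc a v})"

text \<open>v_0,...,v_{k-1} is a basis of J as an F(T^1)-module: every element is
uniquely of the form sum_r f_r v_r with f_r in F(T^1), i.e. a finite linear
combination of the e_m.\<close>
definition F_basis :: "(complex \<Rightarrow> 'v::ab_group_add \<Rightarrow> 'v) \<Rightarrow> (int \<Rightarrow> 'v \<Rightarrow> 'v) \<Rightarrow> nat \<Rightarrow> (nat \<Rightarrow> 'v) \<Rightarrow> bool" where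
  "F_basis sc E k v \<longleftrightarrow>
     (\<forall>w. \<exists>c S. finite S \<and> w = (\<Sum>r<k. \<Sum>m\<in>S. sc (c r m) (E m (v r))))
   \<and> (\<forall>c S. finite S \<longrightarrow> (\<Sum>r<k. \<Sum>m\<in>S. sc (c r m) (E m (v r))) = 0
          \<longrightarrow> (\<forall>r<k. \<forall>m\<in>S. c r m = 0))"

definition free_finite_rank :: "(complex \<Rightarrow> 'v::ab_group_add \<Rightarrow> 'v) \<Rightarrow> (int \<Rightarrow> 'v \<Rightarrow> 'v) \<Rightarrow> bool" where
  "free_finite_rank sc E \<longleftrightarrow> (\<exists>k v. F_basis sc E k v)"

text \<open>(J3) on basis elements: d(s)(e_m w) = (d(s) e_m) w + e_m (d(s) w), with d(s) e_m = m e_{m+s}.\<close>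
definition compatible :: "(complex \<Rightarrow> 'v::ab_group_add \<Rightarrow> 'v) \<Rightarrow> (int \<Rightarrow> 'v \<Rightarrow> 'v) \<Rightarrow> (int \<Rightarrow> 'v \<Rightarrow> 'v) \<Rightarrow> bool" where
  "compatible sc E D \<longleftrightarrow>
     (\<forall>s m w. D s (E m w) = sc (of_int m) (E (m + s) w) + E m (D s w))"

definition in_J1 :: "(complex \<Rightarrow> 'v::ab_group_add \<Rightarrow> 'v) \<Rightarrow> (int \<Rightarrow> 'v \<Rightarrow> 'v) \<Rightarrow> (int \<Rightarrow> 'v \<Rightarrow> 'v) \<Rightarrow> bool" where
  "in_J1 sc E D \<longleftrightarrow> vector_space sc \<and> F_module sc E \<and> W1_module sc D
     \<and> d0_diagonalizable sc D \<and> free_finite_rank sc E \<and> compatible sc E D"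

definition poly2 :: "(int \<Rightarrow> int \<Rightarrow> complex) \<Rightarrow> bool" where
  "poly2 f \<longleftrightarrow> (\<exists>N c. \<forall>s m. f s m =
      (\<Sum>i\<le>N. \<Sum>j\<le>N. c i j * of_int s ^ i * of_int m ^ j))"

definition polynomial_module :: "(complex \<Rightarrow> 'v::ab_group_add \<Rightarrow> 'v) \<Rightarrow> (int \<Rightarrow> 'v \<Rightarrow> 'v) \<Rightarrow> (int \<Rightarrow> 'v \<Rightarrow> 'v) \<Rightarrow> bool" where
  "polynomial_module sc E D \<longleftrightarrow>
     (\<exists>k v f. F_basis sc E k v \<and> (\<forall>r l. poly2 (f r l))
        \<and> (\<forall>s m. \<forall>r<k. D s (E m (v r)) = (\<Sum>l<k. sc (f r l s m) (E (m + s) (v l)))))"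

end

theory Submission
  imports Defs "HOL-Computational_Algebra.Polynomial" "HOL-Library.Function_Algebras"
begin

(* Choose an F-basis w_1, ..., w_K of d(0)-weight vectors whose weights are pairwise
   incongruent modulo the integers; this is possible because every weight space is
   finite-dimensional and only finitely many weight classes occur. In such a basis
   d(s)(e_m w_r) = \<Sum>_l (m \<delta>_rl + M(s)_rl) e_(m+s) w_l with matrices M(s) independent of m,
   and the Witt relations become
     [M(m), M(s)] = (m - s) M(s + m) - m M(m) + s M(s).
   Extend x^i \<mapsto> M(a + i - 1) linearly to polynomials P (this is rho a P). The relation
   says that rho behaves like the vector field x^a P(x) d/dx under brackets, up to terms
   that vanish when P(1) = Q(1) = 0. As the M(s) span a finite-dimensional space, some
   f \<noteq> 0 with f(1) = 0 has rho 0 f = 0; bracketing shows that f^4 is killed by rho at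
   every shift, and applying (x - 1) d/dx repeatedly then shows the same for some
   (x - 1)^c. That says that the c-th finite difference of s \<mapsto> M(s) vanishes, so every
   entry of M(s) is a polynomial in s. *)

section \<open>Finite differences\<close>

fun fwd_diff :: "nat \<Rightarrow> (int \<Rightarrow> 'a::ab_group_add) \<Rightarrow> int \<Rightarrow> 'a" where
  "fwd_diff 0 \<phi> = \<phi>"
| "fwd_diff (Suc j) \<phi> = (\<lambda>n. fwd_diff j \<phi> (n + 1) - fwd_diff j \<phi> n)"

lemma fwd_diff_Suc_inner: "fwd_diff (Suc j) \<phi> = fwd_diff j (\<lambda>n. \<phi> (n + 1) - \<phi> n)"
  by (induction j) auto

lemma newton_forward_formula:
  fixes \<phi> :: "int \<Rightarrow> 'a::field_char_0"
  assumes "\<And>n. fwd_diff N \<phi> n = 0"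
  shows "\<phi> n = (\<Sum>j<N. (of_int n gchoose j) * fwd_diff j \<phi> 0)"
  using assms
proof (induction N arbitrary: \<phi> n)
  case 0
  then show ?case by simp
next
  case (Suc N)
  define \<delta> where "\<delta> = (\<lambda>n. \<phi> (n + 1) - \<phi> n)"
  have \<delta>_newton: "\<delta> n = (\<Sum>j<N. (of_int n gchoose j) * fwd_diff (Suc j) \<phi> 0)" for n
    using Suc.IH[of \<delta> n] Suc.prems by (simp only: \<delta>_def flip: fwd_diff_Suc_inner)
  define \<Psi> where "\<Psi> = (\<lambda>n::int. \<Sum>j<Suc N. (of_int n gchoose j) * fwd_diff j \<phi> 0)"
  have \<Psi>_step: "\<Psi> (n + 1) - \<Psi> n = \<delta> n" for n
  proof -
    have "\<Psi> (n + 1) - \<Psi> n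
        = (\<Sum>j<Suc N. (((of_int n + 1) gchoose j) - (of_int n gchoose j)) * fwd_diff j \<phi> 0)"
      by (simp add: \<Psi>_def sum_subtractf left_diff_distrib del: fwd_diff.simps)
    also have "\<dots> = (\<Sum>j<N. (((of_int n + 1) gchoose Suc j) - (of_int n gchoose Suc j))
                              * fwd_diff (Suc j) \<phi> 0)"
      by (subst sum.lessThan_Suc_shift) simp
    also have "\<dots> = \<delta> n" by (simp add: \<delta>_newton gbinomial_Suc_Suc del: fwd_diff.simps)
    finally show ?thesis .
  qed
  have "\<Psi> 0 = \<phi> 0"
    unfolding \<Psi>_def by (subst sum.lessThan_Suc_shift) simp
  then have "\<phi> n = \<Psi> n"
  proof (induction n rule: int_induct[where k=0])
    case (step1 i) then show ?case using \<Psi>_step[of i] by (simp add: \<delta>_def algebra_simps)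
  next
    case (step2 i) then show ?case using \<Psi>_step[of "i - 1"] by (simp add: \<delta>_def algebra_simps)
  qed simp
  then show ?case by (simp add: \<Psi>_def)
qed

definition gbinomial_poly :: "nat \<Rightarrow> 'a::field_char_0 poly" where
  "gbinomial_poly j = smult (1 / fact j) (\<Prod>i<j. [:- of_nat i, 1:])"

lemma poly_gbinomial_poly: "poly (gbinomial_poly j) x = x gchoose j"
  by (simp add: gbinomial_poly_def gbinomial_prod_rev poly_prod atLeast0LessThan)

lemma fwd_diff_vanishing_imp_poly:
  fixes \<phi> :: "int \<Rightarrow> 'a::field_char_0"
  assumes "\<And>n. fwd_diff N \<phi> n = 0"
  shows "\<exists>P. \<forall>n. \<phi> n = poly P (of_int n)"
proof -
  define P where "P = (\<Sum>j<N. smult (fwd_diff j \<phi> 0) (gbinomial_poly j))"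
  have "\<phi> n = poly P (of_int n)" for n
    by (subst newton_forward_formula[OF assms])
      (simp add: P_def poly_sum poly_gbinomial_poly mult.commute)
  then show ?thesis by blast
qed

lemma pderiv_sum: "pderiv (\<Sum>x\<in>A. f x) = (\<Sum>x\<in>A. pderiv (f x))"
  by (induction A rule: infinite_finite_induct) (auto simp: pderiv_add)

lemma smult_sum_right: "smult c (\<Sum>x\<in>A. f x) = (\<Sum>x\<in>A. smult c (f x))"
  by (induction A rule: infinite_finite_induct) (auto simp: smult_add_right)

lemma pcompose_power: "pcompose (p ^ n) q = (pcompose p q) ^ n"
  by (induction n) (auto simp: pcompose_mult pcompose_1)

lemma X_minus_1_pderiv_power:
  "[:-1, 1:] * pderiv ([:-1, 1:] ^ n) = smult (of_nat n) ([:-1, 1::'a::idom:] ^ n)"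
proof (cases n)
  case (Suc m)
  then show ?thesis by (simp only: pderiv_power_Suc) (simp add: pderiv_pCons)
qed simp

lemma X_minus_1_expansion:
  fixes g :: "'a::idom poly"
  assumes "g \<noteq> 0"
  obtains c d e where "e 0 \<noteq> 0" "g = (\<Sum>j\<le>d. smult (e j) ([:-1, 1:] ^ (c + j)))"
proof -
  define c where "c = order 1 g"
  obtain q where gq: "g = [:-1, 1:] ^ c * q" and q1: "poly q 1 \<noteq> 0"
    using order_decomp[OF assms, of 1] by (auto simp: c_def poly_eq_0_iff_dvd)
  define U where "U = pcompose q [:1, 1:]"
  have "q = pcompose U [:-1, 1:]"
    by (simp add: U_def pcompose_pCons flip: pcompose_assoc)
  also have "U = (\<Sum>j\<le>degree U. smult (coeff U j) ([:0, 1:] ^ j))"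
    by (subst poly_as_sum_of_monoms[symmetric]) (simp add: monom_altdef)
  finally have "q = (\<Sum>j\<le>degree U. smult (coeff U j) ([:-1, 1:] ^ j))"
    by (simp add: pcompose_sum pcompose_smult pcompose_power pcompose_pCons)
  then have "g = (\<Sum>j\<le>degree U. smult (coeff U j) ([:-1, 1:] ^ (c + j)))"
    by (simp add: gq sum_distrib_left power_add)
  moreover have "coeff U 0 = poly q 1"
    by (simp add: U_def poly_pcompose flip: poly_0_coeff_0)
  ultimately show ?thesis using that[of "coeff U"] q1 by simp
qed

lemma sum_smult_X_minus_1_powers_nonzero:
  fixes c :: "nat \<Rightarrow> 'a::idom"
  assumes "finite I" "n0 \<in> I" "c n0 \<noteq> 0"
  shows "(\<Sum>n\<in>I. smult (c n) ([:-1, 1:] ^ Suc n)) \<noteq> 0"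
proof
  assume "(\<Sum>n\<in>I. smult (c n) ([:-1, 1:] ^ Suc n)) = 0"
  then have "pcompose (\<Sum>n\<in>I. smult (c n) ([:-1, 1:] ^ Suc n)) [:1, 1:] = 0"
    by simp
  then have "(\<Sum>n\<in>I. monom (c n) (Suc n)) = 0"
    by (simp add: pcompose_sum pcompose_smult pcompose_power pcompose_pCons monom_altdef
        del: power_Suc)
  then have "coeff (\<Sum>n\<in>I. monom (c n) (Suc n)) (Suc n0) = 0" by simp
  moreover have "coeff (\<Sum>n\<in>I. monom (c n) (Suc n)) (Suc n0) = c n0"
    using assms(1,2) by (simp add: coeff_sum sum.delta)
  ultimately show False using assms(3) by simp
qed

lemma poly_functional_eq_0:
  fixes F :: "'a::comm_ring_1 poly \<Rightarrow> 'a"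
  assumes add: "\<And>P Q. F (P + Q) = F P + F Q"
    and smult: "\<And>c P. F (smult c P) = c * F P"
    and monom: "\<And>i. F (monom 1 i) = 0"
  shows "F P = 0"
proof -
  have F_sum: "F (\<Sum>x\<in>A. g x) = (\<Sum>x\<in>A. F (g x))" if "finite A" for A and g :: "nat \<Rightarrow> 'a poly"
    using that by (induction A rule: finite_induct) (auto simp: add smult[of 0 0, simplified])
  have "F P = F (\<Sum>i\<le>degree P. smult (coeff P i) (monom 1 i))"
    by (simp add: smult_monom poly_as_sum_of_monoms)
  also have "\<dots> = 0"
    by (simp add: F_sum smult monom)
  finally show ?thesis .
qed

lemma poly2_linear_m_plus_poly: "poly2 (\<lambda>s m. a * of_int m + poly P (of_int s))"
proof -
  define N where "N = max (degree P) 1"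
  define c where "c i j = (if j = 0 then coeff P i else 0) + (if i = 0 \<and> j = 1 then a else 0)"
    for i j :: nat
  have double_sum: "(\<Sum>i\<le>N. \<Sum>j\<le>N. c i j * of_int s ^ i * of_int m ^ j)
      = a * of_int m + poly P (of_int s)" for s m :: int
  proof -
    have "c i j * of_int s ^ i * of_int m ^ j
        = (if j = 0 then coeff P i * of_int s ^ i else 0)
          + (if j = 1 then (if i = 0 then a * of_int m else 0) else 0)" for i j
      by (auto simp: c_def)
    then have "(\<Sum>j\<le>N. c i j * of_int s ^ i * of_int m ^ j)
        = coeff P i * of_int s ^ i + (if i = 0 then a * of_int m else 0)" for i
      by (simp add: sum.distrib N_def)
    then have "(\<Sum>i\<le>N. \<Sum>j\<le>N. c i j * of_int s ^ i * of_int m ^ j)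
        = (\<Sum>i\<le>N. coeff P i * of_int s ^ i) + a * of_int m"
      by (simp add: sum.distrib)
    also have "(\<Sum>i\<le>N. coeff P i * of_int s ^ i) = poly P (of_int s)"
      unfolding poly_altdef by (rule sum.mono_neutral_right) (auto simp: N_def coeff_eq_0)
    finally show ?thesis by simp
  qed
  show ?thesis
    unfolding poly2_def by (intro exI[of _ N] exI[of _ c] allI) (simp only: double_sum)
qed

lemma (in vector_space) exists_nontrivial_vanishing_combination:
  assumes "finite I" "finite T" "card T < card I" "\<And>i. i \<in> I \<Longrightarrow> f i \<in> span T"
  obtains c where "(\<Sum>i\<in>I. c i *s f i) = 0" "\<exists>i\<in>I. c i \<noteq> 0"
proof (cases "inj_on f I")
  case True
  have "dependent (f ` I)"
  proof (rule ccontr)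
    assume "independent (f ` I)"
    then have "card (f ` I) \<le> card T"
      using independent_span_bound[OF assms(2)] assms(4) by blast
    then show False using assms(3) True by (simp add: card_image)
  qed
  then obtain u where u: "\<exists>v\<in>f ` I. u v \<noteq> 0" "(\<Sum>v\<in>f ` I. u v *s v) = 0"
    using dependent_finite[OF finite_imageI[OF assms(1)]] by blast
  have "(\<Sum>i\<in>I. u (f i) *s f i) = 0"
    using u(2) by (simp add: sum.reindex[OF True])
  moreover have "\<exists>i\<in>I. u (f i) \<noteq> 0" using u(1) by blast
  ultimately show ?thesis using that[of "u \<circ> f"] by simp
next
  case False
  then obtain a b where ab: "a \<in> I" "b \<in> I" "a \<noteq> b" "f a = f b"
    by (auto simp: inj_on_def)
  define c :: "_ \<Rightarrow> 'a" where "c i = (if i = a then 1 else if i = b then -1 else 0)" for i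
  have "(\<Sum>i\<in>I. c i *s f i) = (\<Sum>i\<in>I. (if i = a then f a else 0) - (if i = b then f b else 0))"
    using ab by (intro sum.cong) (auto simp: c_def)
  also have "\<dots> = 0" using ab assms(1) by (simp add: sum_subtractf)
  finally have "(\<Sum>i\<in>I. c i *s f i) = 0" .
  moreover have "c a \<noteq> 0" by (simp add: c_def)
  ultimately show ?thesis using that[of c] ab(1) by blast
qed

lemma (in vector_space) independent_inj_image_sum_eq_0:
  assumes "independent (w ` R)" "inj_on w R" "finite R"
    and "(\<Sum>r\<in>R. a r *s w r) = 0" "r0 \<in> R"
  shows "a r0 = 0"
proof -
  define u where "u b = a (the_inv_into R w b)" for b
  have "(\<Sum>b\<in>w ` R. u b *s b) = (\<Sum>r\<in>R. a r *s w r)"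
    by (simp add: sum.reindex[OF assms(2)] u_def the_inv_into_f_f[OF assms(2)])
  then have "u (w r0) = 0"
    using independentD[OF assms(1) finite_imageI[OF assms(3)] order_refl] assms(4,5) by simp
  then show ?thesis by (simp add: u_def the_inv_into_f_f[OF assms(2,5)])
qed

lemma (in module) span_image_finite:
  assumes "finite A" "x \<in> span (w ` A)"
  obtains g where "x = (\<Sum>l\<in>A. g l *s w l)"
proof -
  define C where "C = range (\<lambda>g. \<Sum>l\<in>A. g l *s w l)"
  have "subspace C"
    unfolding subspace_def C_def
  proof (intro conjI ballI allI)
    show "0 \<in> range (\<lambda>g. \<Sum>l\<in>A. g l *s w l)"
      by (rule range_eqI[where x = "\<lambda>l. 0"]) simp
    fix x y assume "x \<in> range (\<lambda>g. \<Sum>l\<in>A. g l *s w l)" "y \<in> range (\<lambda>g. \<Sum>l\<in>A. g l *s w l)"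
    then obtain g1 g2 where "x = (\<Sum>l\<in>A. g1 l *s w l)" "y = (\<Sum>l\<in>A. g2 l *s w l)" by blast
    then show "x + y \<in> range (\<lambda>g. \<Sum>l\<in>A. g l *s w l)"
      by (intro range_eqI[where x = "\<lambda>l. g1 l + g2 l"]) (simp add: scale_left_distrib sum.distrib)
  next
    fix c x assume "x \<in> range (\<lambda>g. \<Sum>l\<in>A. g l *s w l)"
    then obtain g where "x = (\<Sum>l\<in>A. g l *s w l)" by blast
    then show "c *s x \<in> range (\<lambda>g. \<Sum>l\<in>A. g l *s w l)"
      by (intro range_eqI[where x = "\<lambda>l. c * g l"]) (simp add: scale_sum_right)
  qed
  moreover have "w ` A \<subseteq> C"
  proof
    fix v assume "v \<in> w ` A"
    then obtain l0 where l0: "l0 \<in> A" "v = w l0" by blast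
    have "(\<Sum>l\<in>A. (if l = l0 then 1 else 0) *s w l) = (\<Sum>l\<in>A. if l = l0 then w l else 0)"
      by (rule sum.cong) simp_all
    also have "\<dots> = v" using l0 assms(1) by simp
    finally show "v \<in> C"
      unfolding C_def by (intro range_eqI) (rule sym)
  qed
  ultimately have "x \<in> C"
    using span_minimal assms(2) by blast
  then show ?thesis
    using that unfolding C_def by blast
qed

interpretation mat: vector_space "\<lambda>c (A :: nat \<Rightarrow> nat \<Rightarrow> 'a::field) r p. c * A r p"
  by unfold_locales (auto simp: fun_eq_iff algebra_simps)

definition unit_mat :: "nat \<times> nat \<Rightarrow> nat \<Rightarrow> nat \<Rightarrow> 'a::zero_neq_one" where
  "unit_mat = (\<lambda>(i, j) r p. if r = i \<and> p = j then 1 else 0)"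

lemma sum_apply: "(\<Sum>x\<in>A. f x) y = (\<Sum>x\<in>A. f x y)"
  by (induction A rule: infinite_finite_induct) auto

lemma supported_mat_in_span:
  fixes A :: "nat \<Rightarrow> nat \<Rightarrow> 'a::field"
  assumes "\<And>r p. k \<le> r \<or> k \<le> p \<Longrightarrow> A r p = 0"
  shows "A \<in> mat.span (unit_mat ` ({..<k} \<times> {..<k}))"
proof -
  have "A = (\<Sum>x\<in>{..<k} \<times> {..<k}. (\<lambda>r p. A (fst x) (snd x) * unit_mat x r p))"
  proof (intro ext)
    fix r p
    show "A r p = (\<Sum>x\<in>{..<k} \<times> {..<k}. (\<lambda>r p. A (fst x) (snd x) * unit_mat x r p)) r p"
    proof (cases "r < k \<and> p < k")
      case True
      have "(\<Sum>x\<in>{..<k} \<times> {..<k}. (\<lambda>r p. A (fst x) (snd x) * unit_mat x r p)) r p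
          = (\<Sum>x\<in>{..<k} \<times> {..<k}. if x = (r, p) then A r p else 0)"
        unfolding sum_apply unit_mat_def by (intro sum.cong refl) (auto split: if_splits)
      also have "\<dots> = A r p" using True by (simp add: sum.delta')
      finally show ?thesis by simp
    next
      case False
      then show ?thesis
        by (auto simp: sum_apply unit_mat_def assms split_def intro!: sum.neutral)
    qed
  qed
  also have "\<dots> \<in> mat.span (unit_mat ` ({..<k} \<times> {..<k}))"
    by (intro mat.span_sum mat.span_scale mat.span_base) auto
  finally show ?thesis .
qed


lemma exists_Ints_representatives:
  fixes \<Gamma> :: "'a::ring_1 set"
  assumes "finite \<Gamma>"
  obtains \<Lambda> where "\<Lambda> \<subseteq> \<Gamma>" "\<And>\<gamma>. \<gamma> \<in> \<Gamma> \<Longrightarrow> \<exists>l\<in>\<Lambda>. \<gamma> - l \<in> \<int>"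
    "\<And>l l'. l \<in> \<Lambda> \<Longrightarrow> l' \<in> \<Lambda> \<Longrightarrow> l - l' \<in> \<int> \<Longrightarrow> l = l'"
  using assms
proof (induction \<Gamma> arbitrary: thesis rule: finite_induct)
  case empty
  then show ?case by blast
next
  case (insert \<gamma> \<Gamma>)
  obtain \<Lambda> where \<Lambda>: "\<Lambda> \<subseteq> \<Gamma>" "\<And>\<gamma>. \<gamma> \<in> \<Gamma> \<Longrightarrow> \<exists>l\<in>\<Lambda>. \<gamma> - l \<in> \<int>"
    "\<And>l l'. l \<in> \<Lambda> \<Longrightarrow> l' \<in> \<Lambda> \<Longrightarrow> l - l' \<in> \<int> \<Longrightarrow> l = l'"
    using insert.IH by blast
  show ?case
  proof (cases "\<exists>l\<in>\<Lambda>. \<gamma> - l \<in> \<int>")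
    case True
    then show ?thesis using insert.prems[of \<Lambda>] \<Lambda> by blast
  next
    case False
    have "l - \<gamma> \<notin> \<int>" if "l \<in> \<Lambda>" for l
      using False that Ints_minus[of "l - \<gamma>"] by auto
    show ?thesis
    proof (rule insert.prems[of "insert \<gamma> \<Lambda>"])
      show "insert \<gamma> \<Lambda> \<subseteq> insert \<gamma> \<Gamma>" using \<Lambda>(1) by blast
      show "\<exists>l\<in>insert \<gamma> \<Lambda>. \<gamma>' - l \<in> \<int>" if "\<gamma>' \<in> insert \<gamma> \<Gamma>" for \<gamma>'
        using that \<Lambda>(2) by auto
      show "l = l'" if "l \<in> insert \<gamma> \<Lambda>" "l' \<in> insert \<gamma> \<Lambda>" "l - l' \<in> \<int>" for l l'
        using that False \<open>\<And>l. l \<in> \<Lambda> \<Longrightarrow> l - \<gamma> \<notin> \<int>\<close> \<Lambda>(3) by auto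
    qed
  qed
qed

section \<open>Matrix families satisfying the Witt relation\<close>

definition mat_mult :: "nat \<Rightarrow> (nat \<Rightarrow> nat \<Rightarrow> 'a::comm_ring) \<Rightarrow> (nat \<Rightarrow> nat \<Rightarrow> 'a) \<Rightarrow> nat \<Rightarrow> nat \<Rightarrow> 'a"
  where "mat_mult k A B r p = (\<Sum>l<k. A r l * B l p)"

(* With P standing for the vector field x^a P(x) d/dx and Q for x^b Q(x) d/dx, their bracket
   is x^(a + b - 1) (vf_bracket a b P Q)(x) d/dx; grading a multiplies the coefficient of x^i
   by a + i - 1. *)
definition vf_bracket :: "int \<Rightarrow> int \<Rightarrow> 'a::idom poly \<Rightarrow> 'a poly \<Rightarrow> 'a poly" where
  "vf_bracket a b P Q = smult (of_int (b - a)) (P * Q) + [:0, 1:] * (P * pderiv Q - pderiv P * Q)"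

definition grading :: "int \<Rightarrow> 'a::idom poly \<Rightarrow> 'a poly" where
  "grading a P = smult (of_int (a - 1)) P + [:0, 1:] * pderiv P"

lemma vf_bracket_add_left: "vf_bracket a b (P1 + P2) Q = vf_bracket a b P1 Q + vf_bracket a b P2 Q"
  by (simp add: vf_bracket_def pderiv_add algebra_simps smult_add_right)

lemma vf_bracket_add_right: "vf_bracket a b P (Q1 + Q2) = vf_bracket a b P Q1 + vf_bracket a b P Q2"
  by (simp add: vf_bracket_def pderiv_add algebra_simps smult_add_right)

lemma vf_bracket_smult_left: "vf_bracket a b (smult c P) Q = smult c (vf_bracket a b P Q)"
  by (simp add: vf_bracket_def pderiv_smult algebra_simps smult_add_right smult_diff_right)

lemma vf_bracket_smult_right: "vf_bracket a b P (smult c Q) = smult c (vf_bracket a b P Q)"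
  by (simp add: vf_bracket_def pderiv_smult algebra_simps smult_add_right smult_diff_right)

lemma grading_add: "grading a (P + Q) = grading a P + grading a Q"
  by (simp add: grading_def pderiv_add algebra_simps smult_add_right)

lemma grading_smult: "grading a (smult c P) = smult c (grading a P)"
  by (simp add: grading_def pderiv_smult algebra_simps smult_add_right)

lemma pCons_0_pderiv_monom: "pCons 0 (pderiv (monom c n)) = monom (of_nat n * c) n"
proof (cases n)
  case (Suc m)
  then show ?thesis by (simp only: pderiv_monom) (simp add: monom_Suc)
qed (simp add: pderiv_monom)

lemma vf_bracket_monom:
  "vf_bracket a b (monom 1 i) (monom 1 j) = monom (of_int (b - a) + of_nat j - of_nat i) (i + j)"
proof -
  have "[:0, 1:] * (monom 1 i * pderiv (monom 1 j) - pderiv (monom 1 i) * monom 1 j)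
      = monom 1 i * ([:0, 1:] * pderiv (monom 1 j)) - ([:0, 1:] * pderiv (monom 1 i)) * monom 1 j"
    by (simp add: algebra_simps)
  also have "\<dots> = monom (of_nat j - of_nat i) (i + j)"
    by (simp add: pCons_0_pderiv_monom mult_monom add.commute flip: diff_monom)
  finally show ?thesis
    by (simp add: vf_bracket_def mult_monom smult_monom flip: add_monom diff_monom)
qed

lemma grading_monom: "grading a (monom 1 i) = monom (of_int (a - 1) + of_nat i) i"
  by (simp add: grading_def pCons_0_pderiv_monom smult_monom flip: add_monom)

(* Matrices are functions supported on {..<k} \<times> {..<k}. If
   d(s)(e_m v_r) = \<Sum>_l (m \<delta>_rl + M s r l) e_(m+s) v_l, then [d(s), d(m)] = (m - s) d(s + m)
   amounts to M_commutator. *)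
locale witt_matrices =
  fixes k :: nat and M :: "int \<Rightarrow> nat \<Rightarrow> nat \<Rightarrow> 'a::field_char_0"
  assumes M_outside: "\<And>s r p. k \<le> r \<or> k \<le> p \<Longrightarrow> M s r p = 0"
    and M_commutator: "\<And>s m r p. mat_mult k (M m) (M s) r p - mat_mult k (M s) (M m) r p
        = of_int (m - s) * M (s + m) r p - of_int m * M m r p + of_int s * M s r p"
begin

definition rho :: "int \<Rightarrow> 'a poly \<Rightarrow> nat \<Rightarrow> nat \<Rightarrow> 'a" where
  "rho a P r p = (\<Sum>i\<le>degree P. coeff P i * M (a + int i - 1) r p)"

lemma rho_altdef:
  assumes "degree P < N"
  shows "rho a P r p = (\<Sum>i<N. coeff P i * M (a + int i - 1) r p)"
proof -
  have "(\<Sum>i<N. coeff P i * M (a + int i - 1) r p)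
      = (\<Sum>i\<le>degree P. coeff P i * M (a + int i - 1) r p)"
    using assms by (intro sum.mono_neutral_right) (auto simp: coeff_eq_0)
  then show ?thesis by (simp add: rho_def)
qed

lemma rho_add: "rho a (P + Q) r p = rho a P r p + rho a Q r p"
proof -
  define N where "N = Suc (max (degree P) (degree Q))"
  have "degree (P + Q) < N" "degree P < N" "degree Q < N"
    unfolding N_def using degree_add_le_max[of P Q] by auto
  then show ?thesis by (simp add: rho_altdef[of _ N] sum.distrib algebra_simps)
qed

lemma rho_smult: "rho a (smult c P) r p = c * rho a P r p"
  by (simp add: rho_def sum_distrib_left mult.assoc)

lemma rho_diff: "rho a (P - Q) r p = rho a P r p - rho a Q r p"
  using rho_add[of a P "-Q" r p] rho_smult[of a "-1" Q r p] by simp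

lemma rho_0: "rho a 0 r p = 0"
  by (simp add: rho_def)

lemma rho_sum: "rho a (\<Sum>x\<in>A. f x) r p = (\<Sum>x\<in>A. rho a (f x) r p)"
  by (induction A rule: infinite_finite_induct) (auto simp: rho_0 rho_add)

lemma rho_monom: "rho a (monom c n) r p = c * M (a + int n - 1) r p"
proof -
  have "rho a (monom c n) r p = (\<Sum>i<Suc n. coeff (monom c n) i * M (a + int i - 1) r p)"
    by (rule rho_altdef) (simp add: degree_monom_le le_imp_less_Suc)
  also have "\<dots> = c * M (a + int n - 1) r p"
    by (subst sum.remove[of _ n]) auto
  finally show ?thesis .
qed

lemma rho_pCons_0: "rho a (pCons 0 P) r p = rho (a + 1) P r p"
proof -
  define N where "N = Suc (degree P)"
  have "rho a (pCons 0 P) r p = (\<Sum>i<Suc N. coeff (pCons 0 P) i * M (a + int i - 1) r p)"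
    by (rule rho_altdef) (auto simp: N_def degree_pCons_le le_imp_less_Suc)
  also have "\<dots> = (\<Sum>i<N. coeff P i * M (a + 1 + int i - 1) r p)"
    by (subst sum.lessThan_Suc_shift) (simp add: algebra_simps)
  also have "\<dots> = rho (a + 1) P r p"
    by (rule rho_altdef[symmetric]) (simp add: N_def)
  finally show ?thesis .
qed

lemma rho_commutator_monom:
  "mat_mult k (rho b (monom 1 j)) (rho a (monom 1 i)) r p
     - mat_mult k (rho a (monom 1 i)) (rho b (monom 1 j)) r p
   = rho (a + b - 1) (vf_bracket a b (monom 1 i) (monom 1 j)) r p
     - rho b (grading b (monom 1 j)) r p + rho a (grading a (monom 1 i)) r p"
proof -
  have "rho c (monom 1 n) = M (c + int n - 1)" for c n
    by (intro ext) (simp add: rho_monom)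
  then show ?thesis
    using M_commutator[of "a + int i - 1" "b + int j - 1" r p]
    by (simp add: vf_bracket_monom grading_monom rho_monom algebra_simps)
qed

lemma rho_commutator:
  "mat_mult k (rho b Q) (rho a P) r p - mat_mult k (rho a P) (rho b Q) r p
   = rho (a + b - 1) (vf_bracket a b P Q) r p
     - poly P 1 * rho b (grading b Q) r p + poly Q 1 * rho a (grading a P) r p"
proof -
  define defect where "defect P Q =
     mat_mult k (rho b Q) (rho a P) r p - mat_mult k (rho a P) (rho b Q) r p
     - (rho (a + b - 1) (vf_bracket a b P Q) r p
        - poly P 1 * rho b (grading b Q) r p + poly Q 1 * rho a (grading a P) r p)" for P Q
  have monomials: "defect (monom 1 i) (monom 1 j) = 0" for i j
    using rho_commutator_monom by (simp add: defect_def poly_monom)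
  have left_linear: "defect (P1 + P2) Q = defect P1 Q + defect P2 Q"
    "defect (smult c P) Q = c * defect P Q" for P P1 P2 Q c
    by (simp_all add: defect_def mat_mult_def rho_add rho_smult vf_bracket_add_left
        vf_bracket_smult_left grading_add grading_smult algebra_simps sum.distrib sum_distrib_left)
  have right_linear: "defect P (Q1 + Q2) = defect P Q1 + defect P Q2"
    "defect P (smult c Q) = c * defect P Q" for P Q Q1 Q2 c
    by (simp_all add: defect_def mat_mult_def rho_add rho_smult vf_bracket_add_right
        vf_bracket_smult_right grading_add grading_smult algebra_simps sum.distrib sum_distrib_left)
  have monomial_right: "defect P (monom 1 j) = 0" for j
    by (rule poly_functional_eq_0[where F = "\<lambda>P. defect P (monom 1 j)"])
      (simp_all only: left_linear monomials)
  have "defect P Q = 0"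
    by (rule poly_functional_eq_0[where F = "defect P"])
      (simp_all only: right_linear monomial_right)
  then show ?thesis by (simp add: defect_def)
qed

lemma rho_outside: "k \<le> r \<or> k \<le> p \<Longrightarrow> rho a P r p = 0"
  by (simp add: rho_def M_outside)

lemma rho_vf_bracket_eq_0:
  assumes "poly P 1 = 0" "poly Q 1 = 0" "rho b Q = 0"
  shows "rho (a + b - 1) (vf_bracket a b P Q) = 0"
  using rho_commutator[of b Q a P] assms by (simp add: fun_eq_iff mat_mult_def)

lemma rho_square_eq_0:
  assumes "poly f 1 = 0" "rho 0 f = 0" "n \<noteq> -1"
  shows "rho n (f * f) = 0"
proof -
  define c :: 'a where "c = - of_int (n + 1)"
  have "n + 1 \<noteq> 0" using assms(3) by simp
  then have "c \<noteq> 0" unfolding c_def by (simp only: neg_equal_0_iff_equal of_int_eq_0_iff) simp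
  have "vf_bracket (n + 1) 0 f f = smult c (f * f)"
    by (simp add: vf_bracket_def c_def mult.commute)
  with rho_vf_bracket_eq_0[of f f 0 "n + 1"] assms(1,2)
  have "rho n (smult c (f * f)) r p = 0" for r p
    by simp
  with \<open>c \<noteq> 0\<close> show ?thesis by (simp add: fun_eq_iff rho_smult)
qed

(* Squaring kills f at every shift except -1; squaring both g = f * f and x g
   covers that shift as well. *)
lemma rho_fourth_power_eq_0:
  assumes f1: "poly f 1 = 0" and f0: "rho 0 f = 0"
  shows "rho n ((f * f) * (f * f)) = 0"
proof -
  define g where "g = f * f"
  have g1: "poly g 1 = 0" using f1 by (simp add: g_def)
  have g0: "rho m g = 0" if "m \<noteq> -1" for m
    using rho_square_eq_0[OF f1 f0 that] by (simp add: g_def)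
  have "rho 0 (pCons 0 g) = 0"
    using g0[of 1] by (simp add: fun_eq_iff rho_pCons_0)
  from rho_square_eq_0[OF _ this, of "n - 2"] g1
  have "n \<noteq> 1 \<Longrightarrow> rho n (g * g) = 0"
    by (simp add: fun_eq_iff rho_pCons_0)
  moreover have "n \<noteq> -1 \<Longrightarrow> rho n (g * g) = 0"
    using rho_square_eq_0[OF g1 g0[of 0]] by simp
  ultimately show ?thesis by (cases "n = 1") (auto simp: g_def)
qed

definition Ann :: "'a poly set" where
  "Ann = {P. poly P 1 = 0 \<and> (\<forall>a. rho a P = 0)}"

lemma Ann_diff: "P \<in> Ann \<Longrightarrow> Q \<in> Ann \<Longrightarrow> P - Q \<in> Ann"
  by (simp add: Ann_def fun_eq_iff rho_diff)

lemma Ann_smult: "P \<in> Ann \<Longrightarrow> smult c P \<in> Ann"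
  by (simp add: Ann_def fun_eq_iff rho_smult)

lemma Ann_X_minus_1_pderiv:
  assumes "P \<in> Ann"
  shows "[:-1, 1:] * pderiv P \<in> Ann"
proof -
  have P1: "poly P 1 = 0" and P0: "\<And>a. rho a P r p = 0" for r p
    using assms by (auto simp: Ann_def fun_eq_iff)
  have "rho a ([:-1, 1:] * pderiv P) r p = 0" for a r p
  proof -
    have "vf_bracket 0 a [:-1, 1:] P = smult (of_int a) (pCons 0 P) - smult (of_int a) P
        + pCons 0 ([:-1, 1:] * pderiv P) - pCons 0 P"
      by (simp add: vf_bracket_def pderiv_pCons algebra_simps smult_add_right smult_diff_right)
    moreover have "rho (0 + a - 1) (vf_bracket 0 a [:-1, 1:] P) = 0"
      using P1 P0 by (intro rho_vf_bracket_eq_0) (auto simp: fun_eq_iff)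
    ultimately show ?thesis
      using P0 by (simp add: fun_eq_iff rho_add rho_diff rho_smult rho_pCons_0)
  qed
  then show ?thesis using P1 by (simp add: Ann_def fun_eq_iff)
qed

(* The operator Q \<mapsto> (x - 1) Q' - (c + t) Q removes the term of (x - 1)^(c + t);
   applying it for t = 1, ..., d leaves a nonzero multiple of (x - 1)^c. *)
lemma X_minus_1_power_in_Ann:
  assumes "(\<Sum>j\<le>d. smult (e j) ([:-1, 1:] ^ (c + j))) \<in> Ann" and "e 0 \<noteq> 0"
  shows "[:-1, 1:] ^ c \<in> Ann"
proof -
  define S where
    "S t = (\<Sum>j\<le>d. smult (e j * (\<Prod>i\<in>{1..t}. of_nat j - of_nat i)) ([:-1, 1:] ^ (c + j)))" for t
  have S_Ann: "S t \<in> Ann" for t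
  proof (induction t)
    case 0
    then show ?case using assms(1) by (simp add: S_def)
  next
    case (Suc t)
    define P where "P j = e j * (\<Prod>i\<in>{1..t}. of_nat j - of_nat i)" for j
    have St: "S t = (\<Sum>j\<le>d. smult (P j) ([:-1, 1:] ^ (c + j)))"
      by (simp add: S_def P_def)
    have "[:-1, 1:] * pderiv (S t) - smult (of_nat (c + Suc t)) (S t)
        = (\<Sum>j\<le>d. smult (P j * of_nat (c + j)) ([:-1, 1:] ^ (c + j))
                    - smult (of_nat (c + Suc t) * P j) ([:-1, 1:] ^ (c + j)))"
      by (simp only: St pderiv_sum pderiv_smult sum_distrib_left mult_smult_right
          X_minus_1_pderiv_power smult_smult smult_sum_right sum_subtractf)
    also have "\<dots> = (\<Sum>j\<le>d. smult (P j * (of_nat j - of_nat (Suc t))) ([:-1, 1:] ^ (c + j)))"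
      by (intro sum.cong refl) (simp add: algebra_simps flip: smult_diff_left)
    also have "\<dots> = S (Suc t)"
      by (simp add: S_def P_def atLeastAtMostSuc_conv mult_ac)
    finally show ?case
      using Suc Ann_X_minus_1_pderiv[of "S t"] by (metis Ann_diff Ann_smult)
  qed
  define \<kappa> where "\<kappa> = e 0 * (\<Prod>i\<in>{1..d}. - of_nat i :: 'a)"
  have "S d = (\<Sum>j\<in>{0}. smult (e j * (\<Prod>i\<in>{1..d}. of_nat j - of_nat i)) ([:-1, 1:] ^ (c + j)))"
    unfolding S_def by (rule sum.mono_neutral_right) (auto intro: prod_zero)
  then have "S d = smult \<kappa> ([:-1, 1:] ^ c)"
    by (simp add: \<kappa>_def)
  moreover have "\<kappa> \<noteq> 0"
    using assms(2) by (simp add: \<kappa>_def)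
  ultimately have "[:-1, 1:] ^ c = smult (1 / \<kappa>) (S d)"
    by simp
  with Ann_smult[OF S_Ann] show ?thesis
    by simp
qed

lemma rho_X_minus_1_power: "rho a ([:-1, 1:] ^ j) r p = fwd_diff j (\<lambda>t. M (t - 1) r p) a"
proof (induction j arbitrary: a)
  case 0
  show ?case using rho_monom[of a 1 0 r p] by simp
next
  case (Suc j)
  have "[:-1, 1:] * q = pCons 0 q - q" for q :: "'a poly"
    by simp
  then show ?case
    by (simp only: power_Suc) (simp add: Suc rho_diff rho_pCons_0)
qed

(* The k * k + 1 matrices rho 0 ((x - 1)^(n + 1)), n \<le> k * k, live in a space of
   dimension k * k, so some nontrivial combination of them vanishes. *)
lemma exists_annihilating_poly:
  obtains f where "f \<noteq> 0" "poly f 1 = 0" "rho 0 f = 0"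
proof -
  define T :: "(nat \<Rightarrow> nat \<Rightarrow> 'a) set" where "T = unit_mat ` ({..<k} \<times> {..<k})"
  define V where "V n = rho 0 ([:-1, 1:] ^ Suc n)" for n
  have card_T: "card T \<le> k * k"
    unfolding T_def using card_image_le[of "{..<k} \<times> {..<k}" unit_mat] by simp
  have V_span: "V n \<in> mat.span T" for n
    unfolding T_def V_def by (rule supported_mat_in_span) (rule rho_outside)
  obtain c where c: "(\<Sum>n\<le>k * k. (\<lambda>r p. c n * V n r p)) = 0" "\<exists>n\<in>{..k * k}. c n \<noteq> 0"
    by (rule mat.exists_nontrivial_vanishing_combination[of "{..k * k}" T V])
      (use card_T V_span in \<open>auto simp: T_def\<close>)
  define f where "f = (\<Sum>n\<le>k * k. smult (c n) ([:-1, 1:] ^ Suc n))"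
  have "f \<noteq> 0"
    using c(2) sum_smult_X_minus_1_powers_nonzero[of "{..k * k}" _ c] by (auto simp: f_def)
  moreover have "poly f 1 = 0"
    by (simp add: f_def poly_sum)
  moreover have "rho 0 f = 0"
    using fun_cong[OF fun_cong[OF c(1)]]
    by (simp add: fun_eq_iff f_def rho_sum rho_smult V_def sum_apply)
  ultimately show ?thesis using that by blast
qed

theorem M_polynomial: "\<exists>P. \<forall>s. M s r p = poly P (of_int s)"
proof -
  obtain f where f: "f \<noteq> 0" "poly f 1 = 0" "rho 0 f = 0"
    using exists_annihilating_poly by blast
  define g where "g = (f * f) * (f * f)"
  have "g \<in> Ann"
    using rho_fourth_power_eq_0[OF f(2,3)] f(2) by (simp add: Ann_def g_def)
  have "g \<noteq> 0" using f(1) by (simp add: g_def)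
  then obtain c d e where "e 0 \<noteq> 0" "g = (\<Sum>j\<le>d. smult (e j) ([:-1, 1:] ^ (c + j)))"
    by (rule X_minus_1_expansion)
  with \<open>g \<in> Ann\<close> have "[:-1, 1:] ^ c \<in> Ann"
    using X_minus_1_power_in_Ann by blast
  then have "fwd_diff c (\<lambda>t. M (t - 1) r p) n = 0" for n
    by (simp add: Ann_def fun_eq_iff flip: rho_X_minus_1_power)
  from fwd_diff_vanishing_imp_poly[OF this]
  obtain P where P: "\<And>n. M (n - 1) r p = poly P (of_int n)" by blast
  have "M s r p = poly (pcompose P [:1, 1:]) (of_int s)" for s
    using P[of "s + 1"] by (simp add: poly_pcompose algebra_simps)
  then show ?thesis by blast
qed

end

section \<open>Weight vectors\<close>

locale J1_module = vector_space sc for sc :: "complex \<Rightarrow> 'v::ab_group_add \<Rightarrow> 'v" +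
  fixes E D :: "int \<Rightarrow> 'v \<Rightarrow> 'v"
  assumes E_linear: "\<And>m. Vector_Spaces.linear sc sc (E m)"
    and E_0: "\<And>w. E 0 w = w"
    and E_E: "\<And>m j w. E m (E j w) = E (m + j) w"
    and D_linear: "\<And>s. Vector_Spaces.linear sc sc (D s)"
    and D_commutator: "\<And>s m w. D s (D m w) - D m (D s w) = sc (of_int (m - s)) (D (s + m) w)"
    and d0_diagonalizable: "\<And>w. w \<in> span {u. \<exists>a. D 0 u = sc a u}"
    and free: "free_finite_rank sc E"
    and D_E: "\<And>s m w. D s (E m w) = sc (of_int m) (E (m + s) w) + E m (D s w)"
begin

lemma E_hom: "module_hom sc sc (E m)"
  using E_linear[of m] by (simp add: linear_iff_module_hom)

lemma D_hom: "module_hom sc sc (D m)"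
  using D_linear[of m] by (simp add: linear_iff_module_hom)

lemmas E_add = module_hom.add[OF E_hom]
  and E_scale = module_hom.scale[OF E_hom]
  and E_zero [simp] = module_hom.zero[OF E_hom]
  and E_sum = module_hom.sum[OF E_hom]
  and D_add = module_hom.add[OF D_hom]
  and D_scale = module_hom.scale[OF D_hom]
  and D_zero = module_hom.zero[OF D_hom]
  and D_sum = module_hom.sum[OF D_hom]

lemma E_minus_E [simp]: "E (- m) (E m x) = x" "E m (E (- m) x) = x"
  by (simp_all add: E_E E_0)

definition weight_space :: "complex \<Rightarrow> 'v set" where
  "weight_space l = {u. D 0 u = sc l u}"

lemma subspace_weight_space: "subspace (weight_space l)"
  unfolding subspace_def weight_space_def
  by (auto simp: D_add D_scale scale_right_distrib scale_left_commute D_zero)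

lemma E_weight_space: "u \<in> weight_space l \<Longrightarrow> E m u \<in> weight_space (l + of_int m)"
  using D_E[of 0 m u] by (simp add: weight_space_def E_scale scale_left_distrib add.commute)

lemma D_weight_space:
  assumes "u \<in> weight_space l"
  shows "D s u \<in> weight_space (l + of_int s)"
proof -
  have "D 0 (D s u) = sc (of_int s) (D s u) + D s (sc l u)"
    using D_commutator[of 0 s u] assms by (simp add: weight_space_def algebra_simps)
  then show ?thesis by (simp add: weight_space_def D_scale scale_left_distrib add.commute)
qed

lemma weight_vectors_sum_eq_0:
  assumes "finite S" "\<And>\<mu>. \<mu> \<in> S \<Longrightarrow> x \<mu> \<in> weight_space \<mu>" "(\<Sum>\<mu>\<in>S. x \<mu>) = 0" "\<mu> \<in> S"
  shows "x \<mu> = 0"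
  using assms
proof (induction S arbitrary: x \<mu> rule: finite_induct)
  case empty
  then show ?case by simp
next
  case (insert a S)
  \<comment> \<open>D 0 - a kills the component of weight a and rescales the others by nonzero factors\<close>
  define x' where "x' \<mu> = sc (\<mu> - a) (x \<mu>)" for \<mu>
  have "D 0 (\<Sum>\<mu>\<in>insert a S. x \<mu>) - sc a (\<Sum>\<mu>\<in>insert a S. x \<mu>) = (\<Sum>\<mu>\<in>insert a S. x' \<mu>)"
    using insert.prems(1)
    by (simp only: D_sum scale_sum_right x'_def scale_left_diff_distrib sum_subtractf)
      (simp add: weight_space_def)
  also have "\<dots> = (\<Sum>\<mu>\<in>S. x' \<mu>)"
    using insert.hyps by (simp add: x'_def)
  finally have "(\<Sum>\<mu>\<in>S. x' \<mu>) = D 0 (\<Sum>\<mu>\<in>insert a S. x \<mu>) - sc a (\<Sum>\<mu>\<in>insert a S. x \<mu>)" ..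
  also have "\<dots> = 0" using insert.prems(2) by (simp add: D_zero)
  finally have "x' \<mu> = 0" if "\<mu> \<in> S" for \<mu>
    using insert.IH[of x' \<mu>] insert.prems(1) that
    by (auto simp: x'_def intro: subspace_scale[OF subspace_weight_space])
  then have x_S: "x \<mu> = 0" if "\<mu> \<in> S" for \<mu>
    using that insert.hyps by (auto simp: x'_def)
  then have "x a = 0" using insert.prems(2) insert.hyps by simp
  then show ?case using insert.prems(3) x_S by auto
qed

lemma weight_component:
  assumes "finite I" "\<And>i. i \<in> I \<Longrightarrow> y i \<in> weight_space (wt i)"
    and "u \<in> weight_space \<mu>" "u = (\<Sum>i\<in>I. y i)"
  shows "u = (\<Sum>i\<in>{i\<in>I. wt i = \<mu>}. y i)"
proof -
  define Y where "Y \<nu> = (\<Sum>i\<in>{i\<in>I. wt i = \<nu>}. y i) - (if \<nu> = \<mu> then u else 0)" for \<nu>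
  have Y_weight: "Y \<nu> \<in> weight_space \<nu>" for \<nu>
    unfolding Y_def using assms(2,3)
    by (intro subspace_diff[OF subspace_weight_space] subspace_sum[OF subspace_weight_space])
      (auto intro: subspace_0[OF subspace_weight_space])
  have "(\<Sum>\<nu>\<in>insert \<mu> (wt ` I). Y \<nu>)
      = (\<Sum>\<nu>\<in>insert \<mu> (wt ` I). \<Sum>i\<in>{i\<in>I. wt i = \<nu>}. y i) - u"
    using assms(1) by (simp add: Y_def sum_subtractf)
  also have "(\<Sum>\<nu>\<in>insert \<mu> (wt ` I). \<Sum>i\<in>{i\<in>I. wt i = \<nu>}. y i) = (\<Sum>i\<in>I. y i)"
    using assms(1)
    by (cases "\<mu> \<in> wt ` I") (auto simp: insert_absorb sum.image_gen[symmetric] intro!: sum.neutral)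
  finally have "Y \<mu> = 0"
    using weight_vectors_sum_eq_0[of "insert \<mu> (wt ` I)" Y \<mu>] assms(1,4) Y_weight by simp
  then show ?thesis by (simp add: Y_def)
qed

lemma weight_decomposition:
  obtains S x where "finite S" "\<And>\<mu>. x \<mu> \<in> weight_space \<mu>" "w = (\<Sum>\<mu>\<in>S. x \<mu>)"
proof -
  obtain t c where t: "finite t" "t \<subseteq> {u. \<exists>a. D 0 u = sc a u}" "w = (\<Sum>u\<in>t. sc (c u) u)"
    using d0_diagonalizable[of w] unfolding span_explicit by blast
  define ev where "ev u = (SOME l. D 0 u = sc l u)" for u
  have ev: "u \<in> weight_space (ev u)" if "u \<in> t" for u
    using t(2) that someI_ex[of "\<lambda>l. D 0 u = sc l u"] by (auto simp: weight_space_def ev_def)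
  define x where "x \<mu> = (\<Sum>u\<in>{u\<in>t. ev u = \<mu>}. sc (c u) u)" for \<mu>
  have "x \<mu> \<in> weight_space \<mu>" for \<mu>
    unfolding x_def using ev
    by (auto intro!: subspace_sum[OF subspace_weight_space]
        subspace_scale[OF subspace_weight_space])
  moreover have "w = (\<Sum>\<mu>\<in>ev ` t. x \<mu>)"
    unfolding x_def t(3) by (rule sum.image_gen[OF t(1)])
  ultimately show ?thesis using that t(1) by blast
qed

(* Expanding u in an F-basis v whose elements have weight components X i \<gamma>, only the
   shifts E m (X i \<gamma>) with \<gamma> + m = \<mu> survive in the weight \<mu> component. *)
lemma weight_vector_in_span_of_shifts:
  assumes basis: "F_basis sc E k v" and Sx: "\<And>i. finite (Sx i)" "\<And>i. i < k \<Longrightarrow> Sx i \<subseteq> \<Gamma>"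
    and X: "\<And>i \<gamma>. X i \<gamma> \<in> weight_space \<gamma>" and v: "\<And>i. v i = (\<Sum>\<gamma>\<in>Sx i. X i \<gamma>)"
    and u: "u \<in> weight_space \<mu>"
  shows "u \<in> span ((\<lambda>(i, \<gamma>). E \<lfloor>Re (\<mu> - \<gamma>)\<rfloor> (X i \<gamma>)) ` ({..<k} \<times> \<Gamma>))" (is "_ \<in> span ?G")
    and "u \<noteq> 0 \<Longrightarrow> \<exists>\<gamma>\<in>\<Gamma>. \<mu> - \<gamma> \<in> \<int>"
proof -
  obtain c S where S: "finite S" "u = (\<Sum>i<k. \<Sum>m\<in>S. sc (c i m) (E m (v i)))"
    using basis unfolding F_basis_def by blast
  define I where "I = Sigma {..<k} (\<lambda>i. S \<times> Sx i)"
  define y where "y = (\<lambda>(i, m, \<gamma>). sc (c i m) (E m (X i \<gamma>)))"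
  define wt where "wt = (\<lambda>(i::nat, m::int, \<gamma>::complex). \<gamma> + of_int m)"
  have "finite I" using S(1) Sx(1) by (auto simp: I_def)
  have "u = (\<Sum>i<k. \<Sum>(m, \<gamma>)\<in>S \<times> Sx i. y (i, m, \<gamma>))"
    by (simp add: S(2) v y_def E_sum scale_sum_right sum.cartesian_product)
  also have "\<dots> = (\<Sum>t\<in>I. y t)"
    unfolding I_def using S(1) Sx(1) by (subst sum.Sigma) (auto simp: split_def)
  finally have u_comp: "u = (\<Sum>t\<in>{t\<in>I. wt t = \<mu>}. y t)"
    using u \<open>finite I\<close>
    by (intro weight_component) (auto simp: I_def y_def wt_def X
        intro!: subspace_scale[OF subspace_weight_space] E_weight_space)
  have components: "y t \<in> span ?G \<and> (\<exists>\<gamma>\<in>\<Gamma>. \<mu> - \<gamma> \<in> \<int>)" if t: "t \<in> I" "wt t = \<mu>" for t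
  proof -
    obtain i m \<gamma> where imt: "t = (i, m, \<gamma>)" "i < k" "\<gamma> \<in> Sx i" "\<mu> - \<gamma> = of_int m"
      using t by (cases t) (auto simp: I_def wt_def)
    then have "\<gamma> \<in> \<Gamma>" using Sx(2) by blast
    moreover have "\<lfloor>Re (\<mu> - \<gamma>)\<rfloor> = m" using imt(4) by simp
    ultimately have "E m (X i \<gamma>) \<in> ?G"
      using imt(2) by (auto intro!: image_eqI[of _ _ "(i, \<gamma>)"])
    then have "y t \<in> span ?G"
      using imt(1) by (simp add: y_def span_scale span_base)
    moreover have "\<mu> - \<gamma> \<in> \<int>" using imt(4) by simp
    ultimately show ?thesis using \<open>\<gamma> \<in> \<Gamma>\<close> by blast
  qed
  show "u \<in> span ?G"
    using components by (subst u_comp) (auto intro: span_sum)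
  show "\<exists>\<gamma>\<in>\<Gamma>. \<mu> - \<gamma> \<in> \<int>" if "u \<noteq> 0"
  proof -
    have "{t\<in>I. wt t = \<mu>} \<noteq> {}"
      using u_comp that by (metis sum.empty)
    then show ?thesis using components by blast
  qed
qed

lemma weight_spaces_finite:
  obtains \<Gamma> where "finite \<Gamma>"
    "\<And>\<mu> u. u \<in> weight_space \<mu> \<Longrightarrow> u \<noteq> 0 \<Longrightarrow> \<exists>\<gamma>\<in>\<Gamma>. \<mu> - \<gamma> \<in> \<int>"
    "\<And>\<mu>. \<exists>G. finite G \<and> weight_space \<mu> \<subseteq> span G"
proof -
  obtain k v where basis: "F_basis sc E k v"
    using free by (auto simp: free_finite_rank_def)
  have "\<forall>i. \<exists>S x. finite S \<and> (\<forall>\<mu>. x \<mu> \<in> weight_space \<mu>) \<and> v i = (\<Sum>\<mu>\<in>S. x \<mu>)"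
    by (metis weight_decomposition)
  then obtain Sx X where Sx: "\<And>i. finite (Sx i)" and X: "\<And>i \<mu>. X i \<mu> \<in> weight_space \<mu>"
    and v: "\<And>i. v i = (\<Sum>\<mu>\<in>Sx i. X i \<mu>)"
    by metis
  define \<Gamma> where "\<Gamma> = (\<Union>i<k. Sx i)"
  have "Sx i \<subseteq> \<Gamma>" if "i < k" for i
    using that by (auto simp: \<Gamma>_def)
  note shifts = weight_vector_in_span_of_shifts[OF basis Sx this X v]
  have "finite \<Gamma>" using Sx by (simp add: \<Gamma>_def)
  moreover have "\<exists>G. finite G \<and> weight_space \<mu> \<subseteq> span G" for \<mu>
  proof (intro exI conjI)
    show "finite ((\<lambda>(i, \<gamma>). E \<lfloor>Re (\<mu> - \<gamma>)\<rfloor> (X i \<gamma>)) ` ({..<k} \<times> \<Gamma>))"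
      using \<open>finite \<Gamma>\<close> by simp
  qed (use shifts(1) in blast)
  ultimately show ?thesis using that shifts(2) by blast
qed

lemma weight_space_finite_basis:
  obtains B where "finite B" "independent B" "B \<subseteq> weight_space \<mu>" "weight_space \<mu> \<subseteq> span B"
proof -
  obtain B where B: "B \<subseteq> weight_space \<mu>" "independent B" "weight_space \<mu> \<subseteq> span B"
    by (meson maximal_independent_subset)
  obtain G where "finite G" "weight_space \<mu> \<subseteq> span G"
    using weight_spaces_finite by metis
  then have "finite B" using independent_span_bound B by blast
  then show ?thesis using that B by blast
qed

definition F_comb :: "nat \<Rightarrow> (nat \<Rightarrow> 'v) \<Rightarrow> (nat \<Rightarrow> int \<Rightarrow> complex) \<Rightarrow> int set \<Rightarrow> 'v" where
  "F_comb K w c S = (\<Sum>r<K. \<Sum>m\<in>S. sc (c r m) (E m (w r)))"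

definition F_span :: "nat \<Rightarrow> (nat \<Rightarrow> 'v) \<Rightarrow> 'v set" where
  "F_span K w = {x. \<exists>c S. finite S \<and> x = F_comb K w c S}"

lemma F_basis_iff:
  "F_basis sc E K w \<longleftrightarrow> (\<forall>x. x \<in> F_span K w)
     \<and> (\<forall>c S. finite S \<longrightarrow> F_comb K w c S = 0 \<longrightarrow> (\<forall>r<K. \<forall>m\<in>S. c r m = 0))"
  by (simp add: F_basis_def F_span_def F_comb_def)

lemma F_comb_extend:
  assumes "finite S'" "S \<subseteq> S'"
  shows "F_comb K w c S = F_comb K w (\<lambda>r m. if m \<in> S then c r m else 0) S'"
  unfolding F_comb_def using assms
  by (intro sum.cong refl sum.mono_neutral_cong_left) auto

lemma F_comb_add: "F_comb K w (\<lambda>r m. c1 r m + c2 r m) S = F_comb K w c1 S + F_comb K w c2 S"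
  by (simp add: F_comb_def scale_left_distrib sum.distrib)

lemma F_comb_scale: "F_comb K w (\<lambda>r m. a * c r m) S = sc a (F_comb K w c S)"
  by (simp add: F_comb_def scale_sum_right)

lemma subspace_F_span: "subspace (F_span K w)"
  unfolding subspace_def
proof (intro conjI ballI allI)
  show "0 \<in> F_span K w"
    unfolding F_span_def F_comb_def by (intro CollectI exI[of _ "\<lambda>r m. 0"] exI[of _ "{}"]) simp
next
  fix x y assume "x \<in> F_span K w" "y \<in> F_span K w"
  then obtain c1 S1 c2 S2 where S: "finite S1" "finite S2"
    and xy: "x = F_comb K w c1 S1" "y = F_comb K w c2 S2"
    unfolding F_span_def by blast
  define c1' where "c1' = (\<lambda>r m. if m \<in> S1 then c1 r m else 0)"
  define c2' where "c2' = (\<lambda>r m. if m \<in> S2 then c2 r m else 0)"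
  have "x + y = F_comb K w c1' (S1 \<union> S2) + F_comb K w c2' (S1 \<union> S2)"
    using S xy F_comb_extend[of "S1 \<union> S2" S1 K w c1] F_comb_extend[of "S1 \<union> S2" S2 K w c2]
    by (simp add: c1'_def c2'_def)
  also have "\<dots> = F_comb K w (\<lambda>r m. c1' r m + c2' r m) (S1 \<union> S2)"
    by (rule F_comb_add[symmetric])
  finally have "x + y = F_comb K w (\<lambda>r m. c1' r m + c2' r m) (S1 \<union> S2)" .
  then show "x + y \<in> F_span K w"
    using S unfolding F_span_def by blast
next
  fix a x assume "x \<in> F_span K w"
  then obtain c S where "finite S" "x = F_comb K w c S"
    unfolding F_span_def by blast
  then show "sc a x \<in> F_span K w"
    unfolding F_span_def by (metis (mono_tags) F_comb_scale mem_Collect_eq)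
qed

lemma E_span_in_F_span:
  assumes "u \<in> span (w ` {..<K})"
  shows "E n u \<in> F_span K w"
  using assms
proof (induction rule: span_induct_alt)
  case base
  then show ?case using subspace_0[OF subspace_F_span] by simp
next
  case (step c x y)
  then obtain r where r: "r < K" "x = w r" by auto
  define c' :: "nat \<Rightarrow> int \<Rightarrow> complex" where "c' = (\<lambda>r' m. if r' = r then 1 else 0)"
  have "F_comb K w c' {n} = (\<Sum>r'<K. if r' = r then E n (w r') else 0)"
    unfolding F_comb_def c'_def by (rule sum.cong) simp_all
  also have "\<dots> = E n x" using r by simp
  finally have "E n x \<in> F_span K w"
    unfolding F_span_def by (intro CollectI exI[of _ c'] exI[of _ "{n}"]) simp
  then show ?case
    unfolding E_add E_scale
    by (intro subspace_add[OF subspace_F_span] subspace_scale[OF subspace_F_span] step.IH)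
qed

end

locale weight_enumeration = J1_module sc E D
  for sc :: "complex \<Rightarrow> 'v::ab_group_add \<Rightarrow> 'v" and E D +
  fixes \<Lambda> :: "complex set" and B :: "complex \<Rightarrow> 'v set"
    and K :: nat and w :: "nat \<Rightarrow> 'v" and lam :: "nat \<Rightarrow> complex"
  assumes \<Lambda>_distinct: "\<And>l l'. l \<in> \<Lambda> \<Longrightarrow> l' \<in> \<Lambda> \<Longrightarrow> l - l' \<in> \<int> \<Longrightarrow> l = l'"
    and \<Lambda>_covers: "\<And>\<mu> u. u \<in> weight_space \<mu> \<Longrightarrow> u \<noteq> 0 \<Longrightarrow> \<exists>l\<in>\<Lambda>. \<mu> - l \<in> \<int>"
    and B_basis: "\<And>l. l \<in> \<Lambda> \<Longrightarrow>
       independent (B l) \<and> B l \<subseteq> weight_space l \<and> weight_space l \<subseteq> span (B l)"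
    and enumeration: "bij_betw (\<lambda>r. (lam r, w r)) {..<K} (Sigma \<Lambda> B)"
begin

lemma enumerated_in_B: "r < K \<Longrightarrow> lam r \<in> \<Lambda> \<and> w r \<in> B (lam r)"
  using enumeration by (auto simp: bij_betw_def)

lemma enumerated_weight: "r < K \<Longrightarrow> w r \<in> weight_space (lam r)"
  using enumerated_in_B B_basis by blast

lemma B_eq_image: "l \<in> \<Lambda> \<Longrightarrow> B l = w ` {r. r < K \<and> lam r = l}"
  using enumeration by (force simp: bij_betw_def)

lemma inj_on_enumeration: "inj_on w {r. r < K \<and> lam r = l}"
  using enumeration by (auto simp: bij_betw_def inj_on_def)

lemma weight_space_enumerated_span:
  assumes "l \<in> \<Lambda>"
  shows "weight_space l \<subseteq> span (w ` {..<K})"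
proof -
  have "B l \<subseteq> w ` {..<K}" using B_eq_image[OF assms] by auto
  then show ?thesis using B_basis[OF assms] span_mono by blast
qed

lemma F_span_enumerated: "x \<in> F_span K w"
proof -
  have weight_vectors: "u \<in> F_span K w" if u: "u \<in> weight_space \<mu>" for u \<mu>
  proof (cases "u = 0")
    case True
    then show ?thesis using subspace_0[OF subspace_F_span] by simp
  next
    case False
    then obtain l n where l: "l \<in> \<Lambda>" "\<mu> = l + of_int n"
      using \<Lambda>_covers[OF u] by (metis Ints_cases add.commute diff_add_cancel)
    have "E (- n) u \<in> weight_space l"
      using E_weight_space[OF u, of "- n"] l(2) by simp
    then have "E n (E (- n) u) \<in> F_span K w"
      using weight_space_enumerated_span[OF l(1)] E_span_in_F_span by blast
    then show ?thesis by simp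
  qed
  obtain S y where "finite S" "\<And>\<mu>. y \<mu> \<in> weight_space \<mu>" "x = (\<Sum>\<mu>\<in>S. y \<mu>)"
    using weight_decomposition by metis
  then show ?thesis
    using weight_vectors by (auto intro: subspace_sum[OF subspace_F_span])
qed

(* The weight lam r0 + m0 component of an F-combination only involves the terms
   E m0 (w r) with lam r = lam r0, since distinct elements of \<Lambda> are not congruent mod \<int>. *)
lemma F_comb_enumerated_eq_0:
  assumes S: "finite S" and comb: "F_comb K w c S = 0" and r0: "r0 < K" and m0: "m0 \<in> S"
  shows "c r0 m0 = 0"
proof -
  define I where "I = {..<K} \<times> S"
  define y where "y = (\<lambda>(r, m). sc (c r m) (E m (w r)))"
  define wt where "wt = (\<lambda>(r, m::int). lam r + of_int m)"
  define R0 where "R0 = {r. r < K \<and> lam r = lam r0}"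
  have "{t\<in>I. wt t = lam r0 + of_int m0} = (\<lambda>r. (r, m0)) ` R0"
  proof (intro equalityI subsetI)
    fix t assume "t \<in> {t\<in>I. wt t = lam r0 + of_int m0}"
    then obtain r m where t: "t = (r, m)" "r < K" "m \<in> S" "lam r - lam r0 = of_int (m0 - m)"
      by (cases t) (auto simp: I_def wt_def algebra_simps)
    then have "lam r = lam r0"
      using \<Lambda>_distinct enumerated_in_B r0 by (metis Ints_of_int)
    then show "t \<in> (\<lambda>r. (r, m0)) ` R0" using t by (auto simp: R0_def)
  qed (use m0 in \<open>auto simp: R0_def I_def wt_def\<close>)
  moreover have "0 = (\<Sum>t\<in>{t\<in>I. wt t = lam r0 + of_int m0}. y t)"
    using S comb enumerated_weight
    by (intro weight_component)
      (auto simp: I_def y_def wt_def F_comb_def sum.cartesian_product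
        intro: subspace_0[OF subspace_weight_space] subspace_scale[OF subspace_weight_space]
          E_weight_space)
  ultimately have "E m0 (\<Sum>r\<in>R0. sc (c r m0) (w r)) = 0"
    by (simp add: sum.reindex inj_on_def y_def E_sum E_scale)
  then have "(\<Sum>r\<in>R0. sc (c r m0) (w r)) = 0"
    by (metis E_minus_E(1) E_zero)
  moreover have "independent (w ` R0)"
    using B_basis[of "lam r0"] B_eq_image[of "lam r0"] enumerated_in_B[OF r0]
    by (simp add: R0_def)
  ultimately show ?thesis
    using independent_inj_image_sum_eq_0[of w R0 "\<lambda>r. c r m0" r0] inj_on_enumeration[of "lam r0"] r0
    by (simp add: R0_def)
qed

lemma F_basis_enumerated: "F_basis sc E K w"
  using F_span_enumerated F_comb_enumerated_eq_0 by (auto simp: F_basis_iff)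

end

context J1_module
begin

lemma exists_weight_F_basis:
  obtains K w lam where "F_basis sc E K w" "\<And>r. r < K \<Longrightarrow> w r \<in> weight_space (lam r)"
    "\<And>r. r < K \<Longrightarrow> weight_space (lam r) \<subseteq> span (w ` {..<K})"
proof -
  obtain \<Gamma> where \<Gamma>: "finite \<Gamma>" "\<And>\<mu> u. u \<in> weight_space \<mu> \<Longrightarrow> u \<noteq> 0 \<Longrightarrow> \<exists>\<gamma>\<in>\<Gamma>. \<mu> - \<gamma> \<in> \<int>"
    using weight_spaces_finite by metis
  obtain \<Lambda> where \<Lambda>: "\<Lambda> \<subseteq> \<Gamma>" "\<And>\<gamma>. \<gamma> \<in> \<Gamma> \<Longrightarrow> \<exists>l\<in>\<Lambda>. \<gamma> - l \<in> \<int>"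
    "\<And>l l'. l \<in> \<Lambda> \<Longrightarrow> l' \<in> \<Lambda> \<Longrightarrow> l - l' \<in> \<int> \<Longrightarrow> l = l'"
    using exists_Ints_representatives[OF \<Gamma>(1)] by metis
  have "\<forall>l. \<exists>B. finite B \<and> independent B \<and> B \<subseteq> weight_space l \<and> weight_space l \<subseteq> span B"
    by (metis weight_space_finite_basis)
  then obtain B where B: "\<And>l. finite (B l)" "\<And>l. independent (B l)"
    "\<And>l. B l \<subseteq> weight_space l" "\<And>l. weight_space l \<subseteq> span (B l)"
    by metis
  have "finite (Sigma \<Lambda> B)"
    using \<Lambda>(1) \<Gamma>(1) B(1) finite_subset by blast
  then obtain h where h: "bij_betw h {..<card (Sigma \<Lambda> B)} (Sigma \<Lambda> B)"
    using ex_bij_betw_nat_finite by (metis atLeast0LessThan)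
  have covers: "\<exists>l\<in>\<Lambda>. \<mu> - l \<in> \<int>" if u: "u \<in> weight_space \<mu>" "u \<noteq> 0" for u \<mu>
  proof -
    obtain \<gamma> l where "\<gamma> \<in> \<Gamma>" "\<mu> - \<gamma> \<in> \<int>" "l \<in> \<Lambda>" "\<gamma> - l \<in> \<int>"
      using \<Gamma>(2)[OF u] \<Lambda>(2) by metis
    then show ?thesis by (metis Ints_add diff_add_cancel add_diff_eq)
  qed
  define K where "K = card (Sigma \<Lambda> B)"
  define w where "w r = snd (h r)" for r
  define lam where "lam r = fst (h r)" for r
  have enumeration: "bij_betw (\<lambda>r. (lam r, w r)) {..<K} (Sigma \<Lambda> B)"
    using h by (simp add: K_def w_def lam_def)
  have B_basis: "independent (B l) \<and> B l \<subseteq> weight_space l \<and> weight_space l \<subseteq> span (B l)" for l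
    using B by blast
  interpret weight_enumeration sc E D \<Lambda> B K w lam
    by unfold_locales (use \<Lambda>(3) covers B_basis enumeration in auto)
  show ?thesis
    using that F_basis_enumerated enumerated_weight weight_space_enumerated_span enumerated_in_B
    by blast
qed

end

section \<open>The coefficient matrices of a weight basis\<close>

locale weight_F_basis = J1_module sc E D
  for sc :: "complex \<Rightarrow> 'v::ab_group_add \<Rightarrow> 'v" and E D +
  fixes K :: nat and w :: "nat \<Rightarrow> 'v" and lam :: "nat \<Rightarrow> complex"
  assumes basis: "F_basis sc E K w"
    and basis_weight: "\<And>r. r < K \<Longrightarrow> w r \<in> weight_space (lam r)"
    and weight_space_span: "\<And>r. r < K \<Longrightarrow> weight_space (lam r) \<subseteq> span (w ` {..<K})"
begin

lemma single_shift_coeffs_eq_0: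
  assumes "(\<Sum>p<K. sc (a p) (E n (w p))) = 0" "p < K"
  shows "a p = 0"
proof -
  have "F_comb K w (\<lambda>p m. a p) {n} = 0"
    using assms(1) by (simp add: F_comb_def)
  moreover have "finite {n}" by simp
  ultimately have "\<forall>r<K. \<forall>m\<in>{n}. a r = 0"
    using basis unfolding F_basis_iff by blast
  then show ?thesis using assms(2) by simp
qed

lemma E_D_basis_in_span:
  assumes "r < K"
  shows "E (- s) (D s (w r)) \<in> span (w ` {..<K})"
proof -
  have "E (- s) (D s (w r)) \<in> weight_space (lam r + of_int s + of_int (- s))"
    by (intro E_weight_space D_weight_space basis_weight assms)
  then show ?thesis using weight_space_span[OF assms] by auto
qed

(* D_matrix s is the matrix of w r \<mapsto> E (- s) (D s (w r)) in the basis w. *)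
definition D_matrix :: "int \<Rightarrow> nat \<Rightarrow> nat \<Rightarrow> complex" where
  "D_matrix s r l =
     (if r < K \<and> l < K then (SOME g. E (- s) (D s (w r)) = (\<Sum>l<K. sc (g l) (w l))) l else 0)"

lemma D_basis: "r < K \<Longrightarrow> D s (w r) = (\<Sum>l<K. sc (D_matrix s r l) (E s (w l)))"
proof -
  assume r: "r < K"
  define g where "g = (SOME g. E (- s) (D s (w r)) = (\<Sum>l<K. sc (g l) (w l)))"
  have "\<exists>g. E (- s) (D s (w r)) = (\<Sum>l<K. sc (g l) (w l))"
    using span_image_finite[OF _ E_D_basis_in_span[OF r]] by (metis finite_lessThan)
  then have "E (- s) (D s (w r)) = (\<Sum>l<K. sc (g l) (w l))"
    unfolding g_def by (rule someI_ex)
  also have "\<dots> = (\<Sum>l<K. sc (D_matrix s r l) (w l))"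
    by (intro sum.cong refl) (simp add: D_matrix_def r g_def)
  finally have "E s (E (- s) (D s (w r))) = (\<Sum>l<K. sc (D_matrix s r l) (E s (w l)))"
    by (simp add: E_sum E_scale)
  then show ?thesis by simp
qed

lemma D_E_basis:
  assumes "r < K"
  shows "D s (E m (w r))
    = (\<Sum>l<K. sc ((if l = r then of_int m else 0) + D_matrix s r l) (E (m + s) (w l)))"
proof -
  have "sc (of_int m) (E (m + s) (w r))
      = (\<Sum>l<K. sc (if l = r then of_int m else 0) (E (m + s) (w l)))"
  proof -
    have "(\<Sum>l<K. sc (if l = r then of_int m else 0) (E (m + s) (w l)))
        = (\<Sum>l<K. if l = r then sc (of_int m) (E (m + s) (w l)) else 0)"
      by (rule sum.cong) simp_all
    then show ?thesis using assms by simp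
  qed
  then show ?thesis
    using D_E[of s m "w r"]
    by (simp add: D_basis[OF assms] E_sum E_scale E_E scale_left_distrib sum.distrib)
qed

lemma D_D_basis:
  assumes "r < K"
  shows "D s (D m (w r))
    = (\<Sum>p<K. sc (of_int m * D_matrix m r p + mat_mult K (D_matrix m) (D_matrix s) r p)
        (E (s + m) (w p)))"
proof -
  have coeff: "(\<Sum>l<K. D_matrix m r l * ((if p = l then of_int m else 0) + D_matrix s l p))
      = of_int m * D_matrix m r p + mat_mult K (D_matrix m) (D_matrix s) r p" if "p < K" for p
  proof -
    have "(\<Sum>l<K. D_matrix m r l * (if p = l then of_int m else 0))
        = (\<Sum>l<K. if p = l then of_int m * D_matrix m r l else 0)"
      by (rule sum.cong) simp_all
    also have "\<dots> = of_int m * D_matrix m r p"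
      using that by simp
    finally show ?thesis
      by (simp add: distrib_left sum.distrib mat_mult_def)
  qed
  have "D s (D m (w r))
      = (\<Sum>l<K. \<Sum>p<K. sc (D_matrix m r l * ((if p = l then of_int m else 0) + D_matrix s l p))
          (E (s + m) (w p)))"
    by (simp add: D_basis[OF assms] D_sum D_scale D_E_basis scale_sum_right add.commute)
  also have "\<dots> = (\<Sum>p<K.
      sc (\<Sum>l<K. D_matrix m r l * ((if p = l then of_int m else 0) + D_matrix s l p))
        (E (s + m) (w p)))"
    by (subst sum.swap) (simp add: scale_sum_left)
  finally show ?thesis
    by (simp add: coeff)
qed

sublocale witt_matrices K D_matrix
proof
  show outside: "D_matrix s r p = 0" if "K \<le> r \<or> K \<le> p" for s r p
    using that by (auto simp: D_matrix_def)
  show "mat_mult K (D_matrix m) (D_matrix s) r p - mat_mult K (D_matrix s) (D_matrix m) r p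
      = of_int (m - s) * D_matrix (s + m) r p - of_int m * D_matrix m r p
        + of_int s * D_matrix s r p"
    for s m r p
  proof (cases "r < K \<and> p < K")
    case False
    then show ?thesis by (auto simp: mat_mult_def outside)
  next
    case True
    define coeff where "coeff q =
      of_int m * D_matrix m r q + mat_mult K (D_matrix m) (D_matrix s) r q
      - (of_int s * D_matrix s r q + mat_mult K (D_matrix s) (D_matrix m) r q)
      - of_int (m - s) * D_matrix (s + m) r q" for q
    have r: "r < K" using True by simp
    have "(\<Sum>q<K. sc (coeff q) (E (s + m) (w q)))
        = D s (D m (w r)) - D m (D s (w r)) - sc (of_int (m - s)) (D (s + m) (w r))"
      unfolding D_D_basis[OF r, of s m] D_D_basis[OF r, of m s] D_basis[OF r, of "s + m"]
        add.commute[of m s]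
      by (simp add: coeff_def scale_sum_right scale_left_diff_distrib sum_subtractf)
    also have "\<dots> = 0"
      using D_commutator[of s m "w r"] by simp
    finally have "coeff p = 0"
      using True single_shift_coeffs_eq_0 by blast
    then show ?thesis by (simp add: coeff_def algebra_simps)
  qed
qed

lemma poly2_D_E_coeffs: "poly2 (\<lambda>s m. (if l = r then of_int m else 0) + D_matrix s r l)"
proof -
  obtain P where "\<And>s. D_matrix s r l = poly P (of_int s)"
    using M_polynomial by blast
  then have "(\<lambda>s m. (if l = r then of_int m else 0) + D_matrix s r l)
      = (\<lambda>s m. (if l = r then 1 else 0) * of_int m + poly P (of_int s))"
    by (simp add: fun_eq_iff)
  then show ?thesis
    using poly2_linear_m_plus_poly by simp
qed

end

lemma J1_module_if_in_J1: "in_J1 sc E D \<Longrightarrow> J1_module sc E D"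
  by (simp add: in_J1_def J1_module_def J1_module_axioms_def F_module_def W1_module_def
      d0_diagonalizable_def compatible_def)

theorem theorem1:
  fixes sc :: "complex \<Rightarrow> 'v::ab_group_add \<Rightarrow> 'v"
    and E D :: "int \<Rightarrow> 'v \<Rightarrow> 'v"
  assumes "in_J1 sc E D"
  shows "polynomial_module sc E D"
proof -
  interpret J1_module sc E D
    using assms by (rule J1_module_if_in_J1)
  obtain K w lam where "F_basis sc E K w" "\<And>r. r < K \<Longrightarrow> w r \<in> weight_space (lam r)"
    "\<And>r. r < K \<Longrightarrow> weight_space (lam r) \<subseteq> span (w ` {..<K})"
    using exists_weight_F_basis by blast
  then interpret weight_F_basis sc E D K w lam
    by unfold_locales
  show ?thesis
    unfolding polynomial_module_def using basis poly2_D_E_coeffs D_E_basis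
    by (intro exI[of _ K] exI[of _ w]
        exI[of _ "\<lambda>r l s m. (if l = r then of_int m else 0) + D_matrix s r l"]) auto
qed

end
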